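(* Let $K$ be a compact metric space, $f:K\to\mathbb{R}$ a function and $\alpha$ a countable ordinal. Then $v_\alpha(f)\le\mathrm{osc}_\alpha f\le v_\alpha(f)+v_\alpha(-f)$ pointwise on $K$.
   Context: For $g:K\to[-\infty,\infty]$, $Ug(x)=\limsup_{y\to x}g(y)=\inf_U\sup g(U)$ over open neighborhoods $U$ of $x$ (non-exclusive limsup). Transfinite oscillations: $\mathrm{osc}_0f\equiv0$; for $\beta=\alpha+1$, $\widetilde{\mathrm{osc}}_\beta f(x)=\limsup_{y\to x}(|f(y)-f(x)|+\mathrm{osc}_\alpha f(y))$; for limit $\beta$, $\widetilde{\mathrm{osc}}_\beta f=\sup_{\alpha<\beta}\mathrm{osc}_\alpha f$; $\mathrm{osc}_\beta f=U\widetilde{\mathrm{osc}}_\beta f$. Positive transfinite oscillations $v_\alpha(f)$ are defined identically but without absolute values: $v_0(f)\equiv0$; $\widetilde v_{\alpha+1}(f)(x)=\limsup_{y\to x}(f(y)-f(x)+v_\alpha(f)(y))$; $\widetilde v_\beta(f)=\sup_{\alpha<\beta}v_\alpha(f)$ for limit $\beta$; $v_\beta(f)=U\widetilde v_\beta(f)$. *)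

theory Defs
  imports "HOL-Analysis.Analysis"
begin

text \<open>Upper envelope / non-exclusive limsup:
  Uenv g x = inf over open neighbourhoods U of x of sup g(U).\<close>
definition Uenv :: "('k::topological_space \<Rightarrow> ereal) \<Rightarrow> 'k \<Rightarrow> ereal" where
  "Uenv g x = (INF U \<in> {U. open U \<and> x \<in> U}. SUP y \<in> U. g y)"

text \<open>Generic transfinite oscillation, indexed by elements of a well-ordered type
  (ordinals = initial segments), with increment d x y (value at y relative to x).
  Index with no predecessors: 0; successor of a: U of x |-> limsup_{y->x} (d x y + osc_a y);
  limit: U of sup over smaller indices.\<close>
definition trans_osc ::
  "('k::topological_space \<Rightarrow> 'k \<Rightarrow> ereal) \<Rightarrow> 'a::wellorder \<Rightarrow> 'k \<Rightarrow> ereal" where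
  "trans_osc d = wfrec {(a, b). a < b}
     (\<lambda>r \<beta>. if (\<forall>\<gamma>. \<not> \<gamma> < \<beta>) then (\<lambda>x. 0)
       else if (\<exists>\<alpha>. \<alpha> < \<beta> \<and> (\<forall>\<gamma>. \<not> (\<alpha> < \<gamma> \<and> \<gamma> < \<beta>)))
       then (let \<alpha> = (SOME \<alpha>. \<alpha> < \<beta> \<and> (\<forall>\<gamma>. \<not> (\<alpha> < \<gamma> \<and> \<gamma> < \<beta>)))
             in Uenv (\<lambda>x. Uenv (\<lambda>y. d x y + r \<alpha> y) x))
       else Uenv (\<lambda>x. SUP \<alpha> \<in> {\<alpha>. \<alpha> < \<beta>}. r \<alpha> x))"

definition osc :: "('k::topological_space \<Rightarrow> real) \<Rightarrow> 'a::wellorder \<Rightarrow> 'k \<Rightarrow> ereal" where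
  "osc f = trans_osc (\<lambda>x y. ereal \<bar>f y - f x\<bar>)"

definition posc :: "('k::topological_space \<Rightarrow> real) \<Rightarrow> 'a::wellorder \<Rightarrow> 'k \<Rightarrow> ereal" where
  "posc f = trans_osc (\<lambda>x y. ereal (f y - f x))"

end

theory Submission
  imports Defs
begin

text \<open>Both inequalities hold for the transfinite oscillations built from any increment,
  by induction along the index. The first is monotonicity in the increment, since
  \<open>f y - f x \<le> \<bar>f y - f x\<bar>\<close>. For the second, \<open>\<bar>f y - f x\<bar>\<close> is the larger of the
  increments of \<open>f\<close> and of \<open>-f\<close>: the limsup of a maximum is the maximum of the limsups,
  and the non-exclusive limsup is subadditive on functions that are nonnegative at the
  point, which all oscillations are; being fixed by \<open>U\<close>, the oscillations of the
  previous stage can be moved out of the limsup.\<close>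

lemma Uenv_ge: "g x \<le> Uenv g x"
  unfolding Uenv_def by (rule INF_greatest) (auto intro: SUP_upper)

lemma Uenv_nonneg: "0 \<le> g x \<Longrightarrow> 0 \<le> Uenv g x"
  using Uenv_ge order_trans by blast

lemma Uenv_mono: "(\<And>y. g y \<le> h y) \<Longrightarrow> Uenv g x \<le> Uenv h x"
  unfolding Uenv_def by (intro INF_mono) (auto intro!: SUP_mono)

lemma Uenv_lessD: "Uenv g x < c \<Longrightarrow> \<exists>V. open V \<and> x \<in> V \<and> (\<forall>y\<in>V. g y < c)"
  unfolding Uenv_def by (auto simp: INF_less_iff intro: le_less_trans SUP_upper)

lemma Uenv_leI: "open V \<Longrightarrow> x \<in> V \<Longrightarrow> (\<And>y. y \<in> V \<Longrightarrow> g y \<le> c) \<Longrightarrow> Uenv g x \<le> c"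
  unfolding Uenv_def by (rule INF_lower2[of V]) (auto intro: SUP_least)

lemma Uenv_const: "Uenv (\<lambda>y. c) x = c"
  by (rule antisym) (auto intro: Uenv_leI[of UNIV] Uenv_ge)

lemma Uenv_Uenv: "Uenv (Uenv g) x = Uenv g x"
proof (rule antisym)
  show "Uenv (Uenv g) x \<le> Uenv g x"
  proof (rule dense_ge)
    fix c assume "Uenv g x < c"
    then obtain V where V: "open V" "x \<in> V" "\<forall>y\<in>V. g y < c"
      using Uenv_lessD by blast
    have "Uenv g y \<le> c" if "y \<in> V" for y
      using V that by (intro Uenv_leI[of V]) (auto intro: less_imp_le)
    with V show "Uenv (Uenv g) x \<le> c" by (intro Uenv_leI[of V]) auto
  qed
qed (rule Uenv_ge)

lemma Uenv_max_le: "Uenv (\<lambda>y. max (g y) (h y)) x \<le> max (Uenv g x) (Uenv h x)"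
proof (rule dense_ge)
  fix c assume "max (Uenv g x) (Uenv h x) < c"
  then obtain V W where "open V" "x \<in> V" "\<forall>y\<in>V. g y < c" "open W" "x \<in> W" "\<forall>y\<in>W. h y < c"
    using Uenv_lessD by (metis max_less_iff_conj)
  then show "Uenv (\<lambda>y. max (g y) (h y)) x \<le> c"
    by (intro Uenv_leI[of "V \<inter> W"]) (auto intro: less_imp_le)
qed

text \<open>Nonnegativity at \<open>x\<close> excludes \<open>\<infinity> + -\<infinity>\<close> from the infima over neighbourhoods.\<close>

lemma Uenv_add_le:
  assumes "0 \<le> g x" "0 \<le> h x"
  shows "Uenv (\<lambda>y. g y + h y) x \<le> Uenv g x + Uenv h x"
proof -
  let ?N = "{U. open U \<and> x \<in> U}"
  have "Uenv (\<lambda>y. g y + h y) x \<le> (INF U\<in>?N. (SUP y\<in>U. g y) + (SUP y\<in>U. h y))"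
    unfolding Uenv_def by (intro INF_mono) (auto intro!: SUP_least add_mono SUP_upper)
  also have "\<dots> = Uenv g x + Uenv h x"
    unfolding Uenv_def
  proof (rule INF_ereal_add_directed)
    fix U assume "U \<in> ?N"
    then show "0 \<le> (SUP y\<in>U. g y)" "0 \<le> (SUP y\<in>U. h y)"
      using assms by (auto intro: SUP_upper2)
  next
    fix U V assume "U \<in> ?N" "V \<in> ?N"
    then show "\<exists>W\<in>?N. (SUP y\<in>W. g y) + (SUP y\<in>W. h y) \<le> (SUP y\<in>U. g y) + (SUP y\<in>V. h y)"
      by (intro bexI[of _ "U \<inter> V"]) (auto intro!: add_mono SUP_subset_mono)
  qed
  finally show ?thesis .
qed

text \<open>The case distinction is made independently of the increment, so that oscillations
  for different increments can be compared at the same predecessor.\<close>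

lemma trans_osc_cases:
  fixes \<beta> :: "'a::wellorder"
  obtains (zero) "\<And>d :: 'k::topological_space \<Rightarrow> 'k \<Rightarrow> ereal. trans_osc d \<beta> = (\<lambda>x. 0)"
  | (succ) \<alpha> where "\<alpha> < \<beta>"
      "\<And>d :: 'k \<Rightarrow> 'k \<Rightarrow> ereal. trans_osc d \<beta> = Uenv (\<lambda>x. Uenv (\<lambda>y. d x y + trans_osc d \<alpha> y) x)"
  | (limit) \<alpha> where "\<alpha> < \<beta>"
      "\<And>d :: 'k \<Rightarrow> 'k \<Rightarrow> ereal. trans_osc d \<beta> = Uenv (\<lambda>x. SUP \<gamma>\<in>{\<gamma>. \<gamma> < \<beta>}. trans_osc d \<gamma> x)"
proof -
  let ?R = "{(a, b). a < (b::'a)}"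
  let ?pred = "\<lambda>\<alpha>. \<alpha> < \<beta> \<and> (\<forall>\<gamma>. \<not> (\<alpha> < \<gamma> \<and> \<gamma> < \<beta>))"
  have unfold: "trans_osc d \<beta> =
      (if \<forall>\<gamma>. \<not> \<gamma> < \<beta> then (\<lambda>x. 0)
       else if \<exists>\<alpha>. ?pred \<alpha>
       then Uenv (\<lambda>x. Uenv (\<lambda>y. d x y + cut (trans_osc d) ?R \<beta> (SOME \<alpha>. ?pred \<alpha>) y) x)
       else Uenv (\<lambda>x. SUP \<gamma>\<in>{\<gamma>. \<gamma> < \<beta>}. cut (trans_osc d) ?R \<beta> \<gamma> x))" for d :: "'k \<Rightarrow> 'k \<Rightarrow> ereal"
    unfolding trans_osc_def Let_def by (rule wfrec[OF wf, THEN trans]) (rule refl)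
  consider "\<forall>\<gamma>. \<not> \<gamma> < \<beta>" | "\<exists>\<alpha>. ?pred \<alpha>" | \<alpha> where "\<alpha> < \<beta>" "\<not> (\<exists>\<alpha>. ?pred \<alpha>)"
    by blast
  then show ?thesis
  proof cases
    case 1
    then show ?thesis by (intro zero) (subst unfold, simp)
  next
    case 2
    define \<alpha> where "\<alpha> = (SOME \<alpha>. ?pred \<alpha>)"
    have "?pred \<alpha>" unfolding \<alpha>_def using 2 by (rule someI_ex)
    then have "\<not> (\<forall>\<gamma>. \<not> \<gamma> < \<beta>)" by blast
    with 2 have "trans_osc d \<beta> = Uenv (\<lambda>x. Uenv (\<lambda>y. d x y + cut (trans_osc d) ?R \<beta> \<alpha> y) x)"
      for d :: "'k \<Rightarrow> 'k \<Rightarrow> ereal"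
      unfolding \<alpha>_def by (subst unfold) (simp only: if_True if_False)
    with \<open>?pred \<alpha>\<close> show ?thesis by (intro succ[of \<alpha>]) (simp_all add: cut_apply)
  next
    case 3
    then have "\<not> (\<forall>\<gamma>. \<not> \<gamma> < \<beta>)" by blast
    with 3 have "trans_osc d \<beta> = Uenv (\<lambda>x. SUP \<gamma>\<in>{\<gamma>. \<gamma> < \<beta>}. cut (trans_osc d) ?R \<beta> \<gamma> x)"
      for d :: "'k \<Rightarrow> 'k \<Rightarrow> ereal"
      by (subst unfold) (simp only: if_False)
    moreover have "(SUP \<gamma>\<in>{\<gamma>. \<gamma> < \<beta>}. cut (trans_osc d) ?R \<beta> \<gamma> x) = (SUP \<gamma>\<in>{\<gamma>. \<gamma> < \<beta>}. trans_osc d \<gamma> x)"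
      for d :: "'k \<Rightarrow> 'k \<Rightarrow> ereal" and x
      by (rule SUP_cong) (auto simp: cut_apply)
    ultimately show ?thesis using 3 by (intro limit[of \<alpha>]) simp_all
  qed
qed

lemma Uenv_trans_osc:
  fixes d :: "'k::topological_space \<Rightarrow> 'k \<Rightarrow> ereal"
  shows "Uenv (trans_osc d \<beta>) x = trans_osc d \<beta> x"
  by (cases \<beta> rule: trans_osc_cases[where 'k = 'k]) (simp_all add: Uenv_const Uenv_Uenv)

lemma trans_osc_nonneg:
  fixes d :: "'k::topological_space \<Rightarrow> 'k \<Rightarrow> ereal"
  assumes "\<And>x. 0 \<le> d x x"
  shows "0 \<le> trans_osc d \<beta> x"
proof (induction \<beta> arbitrary: x rule: less_induct)
  case (less \<beta>)
  show ?case
  proof (cases \<beta> rule: trans_osc_cases[where 'k = 'k])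
    case zero
    then show ?thesis by simp
  next
    case (succ \<alpha>)
    have "0 \<le> d x x + trans_osc d \<alpha> x"
      using assms less succ(1) by (simp add: add_nonneg_nonneg)
    also have "\<dots> \<le> Uenv (\<lambda>y. d x y + trans_osc d \<alpha> y) x"
      by (rule Uenv_ge)
    also have "\<dots> \<le> trans_osc d \<beta> x"
      unfolding succ(2) by (rule Uenv_ge)
    finally show ?thesis .
  next
    case (limit \<alpha>)
    have "0 \<le> trans_osc d \<alpha> x" using less limit(1) by blast
    also have "\<dots> \<le> trans_osc d \<beta> x"
      unfolding limit(2) using limit(1) by (intro order_trans[OF _ Uenv_ge] SUP_upper) auto
    finally show ?thesis .
  qed
qed

lemma trans_osc_mono:
  fixes d e :: "'k::topological_space \<Rightarrow> 'k \<Rightarrow> ereal"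
  assumes "\<And>x y. d x y \<le> e x y"
  shows "trans_osc d \<beta> x \<le> trans_osc e \<beta> x"
proof (induction \<beta> arbitrary: x rule: less_induct)
  case (less \<beta>)
  show ?case
  proof (cases \<beta> rule: trans_osc_cases[where 'k = 'k])
    case zero
    then show ?thesis by simp
  next
    case (succ \<alpha>)
    show ?thesis
      unfolding succ(2) using less succ(1) by (intro Uenv_mono add_mono assms) simp
  next
    case (limit \<alpha>)
    show ?thesis
      unfolding limit(2) using less by (intro Uenv_mono SUP_mono) auto
  qed
qed

lemma Uenv_increment_le_add:
  assumes d: "\<And>y. d x y \<le> max (d1 x y) (d2 x y)" and g: "\<And>y. g y \<le> g1 y + g2 y"
    and nonneg: "0 \<le> d1 x x" "0 \<le> d2 x x" "\<And>y. 0 \<le> g1 y" "\<And>y. 0 \<le> g2 y"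
    and usc: "Uenv g1 x = g1 x" "Uenv g2 x = g2 x"
  shows "Uenv (\<lambda>y. d x y + g y) x \<le> Uenv (\<lambda>y. d1 x y + g1 y) x + Uenv (\<lambda>y. d2 x y + g2 y) x"
    (is "_ \<le> ?A + ?B")
proof -
  have "g1 x \<le> ?A" "g2 x \<le> ?B"
    using nonneg by (auto intro: order_trans[OF _ Uenv_ge] add_increasing)
  have "d x y + g y \<le> max ((d1 x y + g1 y) + g2 y) (g1 y + (d2 x y + g2 y))" for y
  proof -
    have "d x y + g y \<le> max (d1 x y) (d2 x y) + (g1 y + g2 y)"
      by (intro add_mono d g)
    also have "\<dots> \<le> max (d1 x y + (g1 y + g2 y)) (d2 x y + (g1 y + g2 y))"
      by (rule linorder_le_cases[of "d1 x y" "d2 x y"]) (auto simp: max_def intro: add_right_mono)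
    also have "\<dots> = max ((d1 x y + g1 y) + g2 y) (g1 y + (d2 x y + g2 y))"
      by (simp only: ac_simps)
    finally show ?thesis .
  qed
  then have "Uenv (\<lambda>y. d x y + g y) x
      \<le> Uenv (\<lambda>y. max ((d1 x y + g1 y) + g2 y) (g1 y + (d2 x y + g2 y))) x"
    by (rule Uenv_mono)
  also have "\<dots> \<le> max (Uenv (\<lambda>y. (d1 x y + g1 y) + g2 y) x) (Uenv (\<lambda>y. g1 y + (d2 x y + g2 y)) x)"
    by (rule Uenv_max_le)
  also have "\<dots> \<le> ?A + ?B"
  proof (rule max.boundedI)
    have "Uenv (\<lambda>y. (d1 x y + g1 y) + g2 y) x \<le> ?A + g2 x"
      using nonneg usc by (metis Uenv_add_le add_nonneg_nonneg)
    also have "\<dots> \<le> ?A + ?B" using \<open>g2 x \<le> ?B\<close> by (rule add_left_mono)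
    finally show "Uenv (\<lambda>y. (d1 x y + g1 y) + g2 y) x \<le> ?A + ?B" .
  next
    have "Uenv (\<lambda>y. g1 y + (d2 x y + g2 y)) x \<le> g1 x + ?B"
      using nonneg usc by (metis Uenv_add_le add_nonneg_nonneg)
    also have "\<dots> \<le> ?A + ?B" using \<open>g1 x \<le> ?A\<close> by (rule add_right_mono)
    finally show "Uenv (\<lambda>y. g1 y + (d2 x y + g2 y)) x \<le> ?A + ?B" .
  qed
  finally show ?thesis .
qed

lemma trans_osc_le_add:
  fixes d d1 d2 :: "'k::topological_space \<Rightarrow> 'k \<Rightarrow> ereal"
  assumes d: "\<And>x y. d x y \<le> max (d1 x y) (d2 x y)"
    and nonneg: "\<And>x. 0 \<le> d1 x x" "\<And>x. 0 \<le> d2 x x"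
  shows "trans_osc d \<beta> x \<le> trans_osc d1 \<beta> x + trans_osc d2 \<beta> x"
proof (induction \<beta> arbitrary: x rule: less_induct)
  case (less \<beta>)
  have osc_nonneg: "0 \<le> trans_osc d1 \<gamma> y" "0 \<le> trans_osc d2 \<gamma> y" for \<gamma> :: 'a and y
    using nonneg by (auto intro: trans_osc_nonneg)
  show ?case
  proof (cases \<beta> rule: trans_osc_cases[where 'k = 'k])
    case zero
    then show ?thesis by simp
  next
    case (succ \<alpha>)
    let ?A = "\<lambda>z. Uenv (\<lambda>y. d1 z y + trans_osc d1 \<alpha> y) z"
    let ?B = "\<lambda>z. Uenv (\<lambda>y. d2 z y + trans_osc d2 \<alpha> y) z"
    have "Uenv (\<lambda>y. d z y + trans_osc d \<alpha> y) z \<le> ?A z + ?B z" for z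
      using less succ(1) by (intro Uenv_increment_le_add d nonneg osc_nonneg Uenv_trans_osc) simp
    then have "trans_osc d \<beta> x \<le> Uenv (\<lambda>z. ?A z + ?B z) x"
      unfolding succ(2) by (rule Uenv_mono)
    also have "\<dots> \<le> Uenv ?A x + Uenv ?B x"
      using nonneg osc_nonneg by (intro Uenv_add_le Uenv_nonneg add_nonneg_nonneg)
    also have "\<dots> = trans_osc d1 \<beta> x + trans_osc d2 \<beta> x"
      unfolding succ(2) ..
    finally show ?thesis .
  next
    case (limit \<alpha>)
    let ?S = "\<lambda>d z. SUP \<gamma>\<in>{\<gamma>. \<gamma> < \<beta>}. trans_osc d \<gamma> z"
    have "?S d z \<le> ?S d1 z + ?S d2 z" for z
    proof (rule SUP_least)
      fix \<gamma> assume "\<gamma> \<in> {\<gamma>. \<gamma> < \<beta>}"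
      then have "trans_osc d \<gamma> z \<le> trans_osc d1 \<gamma> z + trans_osc d2 \<gamma> z"
        using less by simp
      also have "\<dots> \<le> ?S d1 z + ?S d2 z"
        using \<open>\<gamma> \<in> {\<gamma>. \<gamma> < \<beta>}\<close> by (intro add_mono SUP_upper)
      finally show "trans_osc d \<gamma> z \<le> ?S d1 z + ?S d2 z" .
    qed
    then have "trans_osc d \<beta> x \<le> Uenv (\<lambda>z. ?S d1 z + ?S d2 z) x"
      unfolding limit(2) by (rule Uenv_mono)
    also have "\<dots> \<le> Uenv (?S d1) x + Uenv (?S d2) x"
      using limit(1) osc_nonneg by (intro Uenv_add_le) (auto intro: SUP_upper2)
    also have "\<dots> = trans_osc d1 \<beta> x + trans_osc d2 \<beta> x"
      unfolding limit(2) ..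
    finally show ?thesis .
  qed
qed

theorem proposition3p2:
  fixes f :: "'k::metric_space \<Rightarrow> real" and \<alpha> :: "'a::wellorder"
  assumes "compact (UNIV :: 'k set)"
    and "countable {..<\<alpha>}"
  shows "\<forall>x. posc f \<alpha> x \<le> osc f \<alpha> x \<and>
             osc f \<alpha> x \<le> posc f \<alpha> x + posc (\<lambda>y. - f y) \<alpha> x"
proof
  fix x
  have "posc f \<alpha> x \<le> osc f \<alpha> x"
    unfolding posc_def osc_def by (rule trans_osc_mono) simp
  moreover have "osc f \<alpha> x \<le> posc f \<alpha> x + posc (\<lambda>y. - f y) \<alpha> x"
    unfolding posc_def osc_def by (rule trans_osc_le_add) (simp_all add: abs_real_def)
  ultimately show "posc f \<alpha> x \<le> osc f \<alpha> x \<and> osc f \<alpha> x \<le> posc f \<alpha> x + posc (\<lambda>y. - f y) \<alpha> x" ..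
qed

end
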